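(* Let $\mathcal{G}_s$ be a connected signed graph on nodes $\{1,\dots,n\}$ with symmetric real weight matrix $W$ (entries may be negative), signed adjacency matrix $A_s$ ($[A_s]_{ij}=W_{ij}$ for neighbours $i,j$, zero otherwise), signed degree matrix $D_s=\mathrm{diag}\big(\sum_{j}|[A_s]_{ij}|\big)$ and signed Laplacian $L_s=D_s-A_s$. Take node $n$ as the single input node and partition $$L_s=\begin{bmatrix}A_s^f & B_s^f\\ (B_s^f)^T & a_s\end{bmatrix},\qquad A_s^f\in\mathbb{R}^{(n-1)\times(n-1)},\ B_s^f\in\mathbb{R}^{n-1}.$$ Assume $\mathcal{G}_s$ is structurally balanced, i.e. there is a gauge transformation $G_t=\mathrm{diag}(\sigma_1,\dots,\sigma_n)$, $\sigma_i\in\{\pm1\}$, such that $G_tA_sG_t$ has nonnegative entries, and let $L=G_tL_sG_t$ be the Laplacian of the underlying unsigned graph $\mathcal{G}$ (weights $|W_{ij}|$). Assume $\mathcal{G}$ is input symmetric: there is a permutation matrix $\Pi\neq I$ with $\Pi L=L\Pi$ that fixes the input node $n$. Then there exists a matrix $J'\neq I$ such that (1) $J'A_s^f=A_s^fJ'$; (2) $J'^TB_s^f=B_s^f$; (3) whenever $A_s^fv=\lambda v$, also $A_s^f(J'v)=\lambda J'v$ and $A_s^f(v-J'v)=\lambda(v-J'v)$.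
   Context: A gauge transformation is a diagonal matrix with diagonal entries $\pm1$; it satisfies $G_t=G_t^T=G_t^{-1}$. For a structurally balanced signed graph, $G_tL_sG_t$ equals the (unsigned) Laplacian of the graph with edge weights $|W_{ij}|$. A permutation matrix $\Pi$ commuting with the unsigned adjacency matrix (equivalently with $L$) corresponds to a (weight-preserving) graph automorphism; "fixing node $n$" means $\Pi e_n=e_n$. *)

theory Defs
  imports Complex_Main
begin

text \<open>Matrices are functions nat => nat => real, used only on an explicit index
  range {1..m}. Nodes of the graph are 1..n; node n is the input node.\<close>

definition mmul :: "nat \<Rightarrow> (nat \<Rightarrow> nat \<Rightarrow> real) \<Rightarrow> (nat \<Rightarrow> nat \<Rightarrow> real) \<Rightarrow> (nat \<Rightarrow> nat \<Rightarrow> real)" where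
  "mmul m X Y = (\<lambda>i j. \<Sum>k\<in>{1..m}. X i k * Y k j)"

definition mvec :: "nat \<Rightarrow> (nat \<Rightarrow> nat \<Rightarrow> real) \<Rightarrow> (nat \<Rightarrow> real) \<Rightarrow> (nat \<Rightarrow> real)" where
  "mvec m X v = (\<lambda>i. \<Sum>k\<in>{1..m}. X i k * v k)"

definition mtrans :: "(nat \<Rightarrow> nat \<Rightarrow> real) \<Rightarrow> (nat \<Rightarrow> nat \<Rightarrow> real)" where
  "mtrans X = (\<lambda>i j. X j i)"

definition idm :: "nat \<Rightarrow> nat \<Rightarrow> real" where
  "idm = (\<lambda>i j. if i = j then 1 else 0)"

definition meq :: "nat \<Rightarrow> (nat \<Rightarrow> nat \<Rightarrow> real) \<Rightarrow> (nat \<Rightarrow> nat \<Rightarrow> real) \<Rightarrow> bool" where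
  "meq m X Y \<longleftrightarrow> (\<forall>i\<in>{1..m}. \<forall>j\<in>{1..m}. X i j = Y i j)"

definition veq :: "nat \<Rightarrow> (nat \<Rightarrow> real) \<Rightarrow> (nat \<Rightarrow> real) \<Rightarrow> bool" where
  "veq m u v \<longleftrightarrow> (\<forall>i\<in>{1..m}. u i = v i)"

definition is_graph :: "nat \<Rightarrow> (nat \<Rightarrow> nat \<Rightarrow> bool) \<Rightarrow> bool" where
  "is_graph n E \<longleftrightarrow> (\<forall>i j. E i j \<longrightarrow> i \<in> {1..n} \<and> j \<in> {1..n} \<and> i \<noteq> j \<and> E j i)"

definition connected_graph :: "nat \<Rightarrow> (nat \<Rightarrow> nat \<Rightarrow> bool) \<Rightarrow> bool" where
  "connected_graph n E \<longleftrightarrow> (\<forall>i\<in>{1..n}. \<forall>j\<in>{1..n}. E\<^sup>*\<^sup>* i j)"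

definition signed_adj :: "(nat \<Rightarrow> nat \<Rightarrow> bool) \<Rightarrow> (nat \<Rightarrow> nat \<Rightarrow> real) \<Rightarrow> (nat \<Rightarrow> nat \<Rightarrow> real)" where
  "signed_adj E W = (\<lambda>i j. if E i j then W i j else 0)"

definition signed_deg :: "nat \<Rightarrow> (nat \<Rightarrow> nat \<Rightarrow> real) \<Rightarrow> (nat \<Rightarrow> nat \<Rightarrow> real)" where
  "signed_deg n A = (\<lambda>i j. if i = j then (\<Sum>k\<in>{1..n}. \<bar>A i k\<bar>) else 0)"

definition signed_lap :: "nat \<Rightarrow> (nat \<Rightarrow> nat \<Rightarrow> real) \<Rightarrow> (nat \<Rightarrow> nat \<Rightarrow> real)" where
  "signed_lap n A = (\<lambda>i j. signed_deg n A i j - A i j)"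

definition gauge :: "nat \<Rightarrow> (nat \<Rightarrow> real) \<Rightarrow> (nat \<Rightarrow> nat \<Rightarrow> real)" where
  "gauge n \<sigma> = (\<lambda>i j. if i = j \<and> i \<in> {1..n} then \<sigma> i else 0)"

definition is_gauge_signs :: "nat \<Rightarrow> (nat \<Rightarrow> real) \<Rightarrow> bool" where
  "is_gauge_signs n \<sigma> \<longleftrightarrow> (\<forall>i\<in>{1..n}. \<sigma> i = 1 \<or> \<sigma> i = -1)"

text \<open>Permutation matrix of a permutation p of {1..n}: column j has its 1 in row p j,
  so that the matrix maps e_j to e_(p j).\<close>
definition perm_mat :: "(nat \<Rightarrow> nat) \<Rightarrow> (nat \<Rightarrow> nat \<Rightarrow> real)" where
  "perm_mat p = (\<lambda>i j. if i = p j then 1 else 0)"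

end

theory Submission
  imports Defs
begin

text \<open>Conjugating by the gauge turns the permutation symmetry of the unsigned Laplacian
  \<open>L = G L\<^sub>s G\<close> into a symmetry \<open>G \<Pi> G\<close> of the signed Laplacian \<open>L\<^sub>s\<close>, since
  \<open>(G\<Pi>G)(GLG) = G\<Pi>LG = GL\<Pi>G = (GLG)(G\<Pi>G)\<close>. Because \<open>\<Pi>\<close> fixes the input node,
  \<open>G\<Pi>G\<close> is block diagonal; its upper-left block \<open>J'\<close> commutes with \<open>A\<^sub>s\<^sup>f\<close>, the last
  column of the commutation relation gives \<open>J'\<^sup>T B\<^sub>s\<^sup>f = B\<^sub>s\<^sup>f\<close>, and \<open>J' \<noteq> I\<close> because \<open>\<Pi>\<close>
  moves some node other than the input. A matrix commuting with \<open>A\<^sub>s\<^sup>f\<close> preserves its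
  eigenspaces.\<close>

definition signed_perm_mat :: "(nat \<Rightarrow> real) \<Rightarrow> (nat \<Rightarrow> nat) \<Rightarrow> nat \<Rightarrow> nat \<Rightarrow> real" where
  "signed_perm_mat \<sigma> p = (\<lambda>i j. if i = p j then \<sigma> i * \<sigma> j else 0)"

lemma perm_mat_eq_signed_perm_mat: "perm_mat p = signed_perm_mat (\<lambda>_. 1) p"
  unfolding perm_mat_def signed_perm_mat_def by (intro ext) simp

lemma mmul_signed_perm_mat_left:
  assumes "inj_on p {1..m}" "a \<in> {1..m}"
  shows "mmul m (signed_perm_mat \<sigma> p) X (p a) j = \<sigma> (p a) * \<sigma> a * X a j"
proof -
  have "mmul m (signed_perm_mat \<sigma> p) X (p a) j
      = (\<Sum>k\<in>{1..m}. if k = a then \<sigma> (p a) * \<sigma> a * X a j else 0)"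
    unfolding mmul_def signed_perm_mat_def
    by (rule sum.cong) (use assms in \<open>auto dest: inj_onD\<close>)
  then show ?thesis using assms(2) by simp
qed

lemma mmul_signed_perm_mat_right:
  assumes "p j \<in> {1..m}"
  shows "mmul m X (signed_perm_mat \<sigma> p) i j = X i (p j) * \<sigma> (p j) * \<sigma> j"
proof -
  have "mmul m X (signed_perm_mat \<sigma> p) i j
      = (\<Sum>k\<in>{1..m}. if k = p j then X i (p j) * \<sigma> (p j) * \<sigma> j else 0)"
    unfolding mmul_def signed_perm_mat_def by (rule sum.cong) auto
  then show ?thesis using assms by simp
qed

lemma mmul_gauge_gauge:
  assumes "i \<in> {1..n}" "j \<in> {1..n}"
  shows "mmul n (mmul n (gauge n \<sigma>) X) (gauge n \<sigma>) i j = \<sigma> i * X i j * \<sigma> j"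
proof -
  have "mmul n (gauge n \<sigma>) X i j = \<sigma> i * X i j"
    unfolding mmul_def gauge_def using assms(1)
    by (simp add: if_distrib[of "\<lambda>x. x * _"] cong: if_cong)
  moreover have "mmul n Y (gauge n \<sigma>) i j = Y i j * \<sigma> j" for Y
    unfolding mmul_def gauge_def using assms(2)
    by (simp add: if_distrib[of "\<lambda>x. _ * x"] cong: if_cong)
  ultimately show ?thesis by simp
qed

lemma perm_mat_commute_entry:
  assumes "bij_betw p {1..n} {1..n}"
    and "meq n (mmul n (perm_mat p) X) (mmul n X (perm_mat p))"
    and "a \<in> {1..n}" "j \<in> {1..n}"
  shows "X (p a) (p j) = X a j"
proof -
  have pa: "p a \<in> {1..n}" and pj: "p j \<in> {1..n}" and inj: "inj_on p {1..n}"
    using assms(1,3,4) by (auto simp: bij_betw_def)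
  have "X a j = mmul n (perm_mat p) X (p a) j"
    unfolding perm_mat_eq_signed_perm_mat by (simp add: mmul_signed_perm_mat_left[OF inj assms(3)])
  also have "\<dots> = mmul n X (perm_mat p) (p a) j"
    using assms(2) pa assms(4) unfolding meq_def by blast
  also have "\<dots> = X (p a) (p j)"
    unfolding perm_mat_eq_signed_perm_mat by (simp add: mmul_signed_perm_mat_right[where p = p and j = j, OF pj])
  finally show ?thesis by simp
qed

lemma perm_mat_commute_gauge_conj_entry:
  assumes "bij_betw p {1..n} {1..n}"
    and "meq n (mmul n (perm_mat p) (mmul n (mmul n (gauge n \<sigma>) M) (gauge n \<sigma>)))
               (mmul n (mmul n (mmul n (gauge n \<sigma>) M) (gauge n \<sigma>)) (perm_mat p))"
    and "a \<in> {1..n}" "j \<in> {1..n}"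
  shows "\<sigma> (p a) * M (p a) (p j) * \<sigma> (p j) = \<sigma> a * M a j * \<sigma> j"
proof -
  have "p a \<in> {1..n}" "p j \<in> {1..n}" using assms(1,3,4) by (auto simp: bij_betw_def)
  then show ?thesis
    using perm_mat_commute_entry[OF assms] assms(3,4) by (simp add: mmul_gauge_gauge)
qed

lemma bij_betw_atLeastAtMost_fixed_last:
  fixes n :: nat
  assumes "bij_betw p {1..n} {1..n}" "p n = n"
  shows "bij_betw p {1..n - 1} {1..n - 1}"
proof (cases "n = 0")
  case False
  then have "bij_betw p ({1..n} - {n}) ({1..n} - {n})"
    using assms by (intro bij_betw_DiffI) auto
  moreover have "{1..n} - {n} = {1..n - 1}" by auto
  ultimately show ?thesis by simp
qed (simp add: bij_betw_def)

lemma signed_perm_mat_commute: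
  assumes p: "bij_betw p {1..m} {1..m}"
    and sq: "\<forall>a\<in>{1..m}. \<sigma> a * \<sigma> a = 1"
    and inv: "\<forall>a\<in>{1..m}. \<forall>j\<in>{1..m}. \<sigma> (p a) * M (p a) (p j) * \<sigma> (p j) = \<sigma> a * M a j * \<sigma> j"
  shows "meq m (mmul m (signed_perm_mat \<sigma> p) M) (mmul m M (signed_perm_mat \<sigma> p))"
  unfolding meq_def
proof (intro ballI)
  fix i j assume i: "i \<in> {1..m}" and j: "j \<in> {1..m}"
  obtain a where a: "a \<in> {1..m}" "i = p a"
    using p i by (metis bij_betw_def imageE)
  have pj: "p j \<in> {1..m}" and inj: "inj_on p {1..m}"
    using p j by (auto simp: bij_betw_def)
  have pa: "p a \<in> {1..m}" using p a(1) by (auto simp: bij_betw_def)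
  have "\<sigma> (p a) * \<sigma> a * M a j = \<sigma> (p a) * \<sigma> a * M a j * (\<sigma> j * \<sigma> j)"
    using sq j by simp
  also have "\<dots> = \<sigma> (p a) * \<sigma> j * (\<sigma> a * M a j * \<sigma> j)"
    by (simp only: ac_simps)
  also have "\<dots> = (\<sigma> (p a) * \<sigma> (p a)) * M (p a) (p j) * \<sigma> (p j) * \<sigma> j"
    using inv a(1) j by (simp add: ac_simps)
  also have "\<dots> = M (p a) (p j) * \<sigma> (p j) * \<sigma> j"
    using sq pa by simp
  finally show "mmul m (signed_perm_mat \<sigma> p) M i j = mmul m M (signed_perm_mat \<sigma> p) i j"
    using a pj inj by (simp add: mmul_signed_perm_mat_left mmul_signed_perm_mat_right)
qed

lemma mtrans_signed_perm_mat_fixed_column: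
  assumes p: "\<forall>i\<in>{1..m}. p i \<in> {1..m}"
    and sq: "\<forall>a\<in>{1..m}. \<sigma> a * \<sigma> a = 1"
    and inv: "\<forall>i\<in>{1..m}. \<sigma> (p i) * b (p i) = \<sigma> i * b i"
  shows "veq m (mvec m (mtrans (signed_perm_mat \<sigma> p)) b) b"
  unfolding veq_def
proof
  fix i assume i: "i \<in> {1..m}"
  have "mvec m (mtrans (signed_perm_mat \<sigma> p)) b i
      = (\<Sum>k\<in>{1..m}. if k = p i then \<sigma> (p i) * \<sigma> i * b (p i) else 0)"
    unfolding mvec_def mtrans_def signed_perm_mat_def by (rule sum.cong) auto
  also have "\<dots> = \<sigma> i * (\<sigma> (p i) * b (p i))"
    using p i by simp
  also have "\<dots> = b i"
    using inv sq i by (simp add: mult.assoc[symmetric])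
  finally show "mvec m (mtrans (signed_perm_mat \<sigma> p)) b i = b i" .
qed

lemma signed_perm_mat_neq_idm:
  assumes "\<not> meq n (perm_mat p) idm" "p n = n"
    and "bij_betw p {1..n} {1..n}" "\<forall>a\<in>{1..n}. \<sigma> a \<noteq> 0"
  shows "\<not> meq (n - 1) (signed_perm_mat \<sigma> p) idm"
proof
  assume J: "meq (n - 1) (signed_perm_mat \<sigma> p) idm"
  obtain j where j: "j \<in> {1..n}" "p j \<noteq> j"
    using assms(1) unfolding meq_def perm_mat_def idm_def by (auto split: if_splits)
  moreover have "p j \<noteq> n" "p j \<in> {1..n}"
    using assms(2,3) j by (auto simp: bij_betw_def dest: inj_onD)
  moreover have "j \<noteq> n" using j(2) assms(2) by metis
  ultimately have "j \<in> {1..n - 1}" "p j \<in> {1..n - 1}"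
    using j(1) by auto
  then have "signed_perm_mat \<sigma> p (p j) j = 0"
    using J j(2) unfolding meq_def idm_def by force
  then show False
    using assms(4) \<open>p j \<in> {1..n}\<close> j(1) unfolding signed_perm_mat_def by auto
qed

lemma mvec_mmul: "mvec m X (mvec m Y v) = mvec m (mmul m X Y) v"
  unfolding mvec_def mmul_def
  by (auto simp: sum_distrib_left sum_distrib_right mult.assoc intro: sum.swap)

lemma commuting_mat_eigenvector:
  assumes comm: "meq m (mmul m J A) (mmul m A J)"
    and eig: "veq m (mvec m A v) (\<lambda>i. lam * v i)"
  shows "veq m (mvec m A (mvec m J v)) (\<lambda>i. lam * mvec m J v i)"
  unfolding veq_def
proof
  fix i assume i: "i \<in> {1..m}"
  have "mvec m A (mvec m J v) i = mvec m (mmul m A J) v i"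
    by (simp add: mvec_mmul)
  also have "\<dots> = mvec m (mmul m J A) v i"
    using comm i unfolding mvec_def meq_def by (intro sum.cong) auto
  also have "\<dots> = mvec m J (mvec m A v) i"
    by (simp add: mvec_mmul)
  also have "\<dots> = mvec m J (\<lambda>i. lam * v i) i"
    using eig unfolding mvec_def veq_def by (intro sum.cong) auto
  also have "\<dots> = lam * mvec m J v i"
    unfolding mvec_def by (simp add: sum_distrib_left mult.left_commute)
  finally show "mvec m A (mvec m J v) i = lam * mvec m J v i" .
qed

lemma eigenvector_diff:
  assumes "veq m (mvec m A v) (\<lambda>i. lam * v i)" "veq m (mvec m A w) (\<lambda>i. lam * w i)"
  shows "veq m (mvec m A (\<lambda>i. v i - w i)) (\<lambda>i. lam * (v i - w i))"
  using assms unfolding veq_def mvec_def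
  by (simp add: right_diff_distrib sum_subtractf)

theorem lemma2:
  fixes n :: nat and E :: "nat \<Rightarrow> nat \<Rightarrow> bool" and W :: "nat \<Rightarrow> nat \<Rightarrow> real"
    and \<sigma> :: "nat \<Rightarrow> real" and p :: "nat \<Rightarrow> nat"
  assumes graph: "is_graph n E"
    and conn: "connected_graph n E"
    and Wsym: "\<forall>i\<in>{1..n}. \<forall>j\<in>{1..n}. W i j = W j i"
    and signs: "is_gauge_signs n \<sigma>"
    and balanced: "\<forall>i\<in>{1..n}. \<forall>j\<in>{1..n}.
        mmul n (mmul n (gauge n \<sigma>) (signed_adj E W)) (gauge n \<sigma>) i j \<ge> 0"
    and perm: "bij_betw p {1..n} {1..n}"
    and Pi_ne_I: "\<not> meq n (perm_mat p) idm"
    and fixes_input: "p n = n"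
    and commute: "meq n
        (mmul n (perm_mat p) (mmul n (mmul n (gauge n \<sigma>) (signed_lap n (signed_adj E W))) (gauge n \<sigma>)))
        (mmul n (mmul n (mmul n (gauge n \<sigma>) (signed_lap n (signed_adj E W))) (gauge n \<sigma>)) (perm_mat p))"
  shows "\<exists>J :: nat \<Rightarrow> nat \<Rightarrow> real.
    (let Ls = signed_lap n (signed_adj E W);
         Af = Ls;
         Bf = (\<lambda>i. Ls i n)
     in \<not> meq (n - 1) J idm
      \<and> meq (n - 1) (mmul (n - 1) J Af) (mmul (n - 1) Af J)
      \<and> veq (n - 1) (mvec (n - 1) (mtrans J) Bf) Bf
      \<and> (\<forall>(v :: nat \<Rightarrow> real) (lam :: real). veq (n - 1) (mvec (n - 1) Af v) (\<lambda>i. lam * v i) \<longrightarrow>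
            veq (n - 1) (mvec (n - 1) Af (mvec (n - 1) J v)) (\<lambda>i. lam * mvec (n - 1) J v i)
          \<and> veq (n - 1) (mvec (n - 1) Af (\<lambda>i. v i - mvec (n - 1) J v i))
                (\<lambda>i. lam * (v i - mvec (n - 1) J v i))))"
proof -
  define Ls where "Ls = signed_lap n (signed_adj E W)"
  define J where "J = signed_perm_mat \<sigma> p"
  have sq: "\<forall>a\<in>{1..n}. \<sigma> a * \<sigma> a = 1"
    using signs unfolding is_gauge_signs_def by force
  have inv: "\<forall>a\<in>{1..n}. \<forall>j\<in>{1..n}. \<sigma> (p a) * Ls (p a) (p j) * \<sigma> (p j) = \<sigma> a * Ls a j * \<sigma> j"
    using perm_mat_commute_gauge_conj_entry[OF perm commute[folded Ls_def]] by blast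
  have perm': "bij_betw p {1..n - 1} {1..n - 1}"
    using bij_betw_atLeastAtMost_fixed_last[OF perm fixes_input] .
  have comm: "meq (n - 1) (mmul (n - 1) J Ls) (mmul (n - 1) Ls J)"
    unfolding J_def using perm' sq inv by (intro signed_perm_mat_commute) auto
  have "\<sigma> (p i) * Ls (p i) n = \<sigma> i * Ls i n" if "i \<in> {1..n - 1}" for i
  proof -
    have i: "i \<in> {1..n}" and nn: "n \<in> {1..n}" using that by auto
    have "(\<sigma> (p i) * Ls (p i) n) * \<sigma> n = (\<sigma> i * Ls i n) * \<sigma> n"
      using inv[rule_format, OF i nn] fixes_input by simp
    moreover have "\<sigma> n \<noteq> 0" using sq nn by force
    ultimately show ?thesis by simp
  qed
  then have col: "veq (n - 1) (mvec (n - 1) (mtrans J) (\<lambda>i. Ls i n)) (\<lambda>i. Ls i n)"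
    unfolding J_def using perm' sq
    by (intro mtrans_signed_perm_mat_fixed_column) (auto simp: bij_betw_def)
  have "\<not> meq (n - 1) J idm"
    unfolding J_def using Pi_ne_I fixes_input perm sq
    by (intro signed_perm_mat_neq_idm) force+
  with comm col show ?thesis
    unfolding Let_def Ls_def[symmetric]
    by (intro exI[of _ J]) (blast intro: commuting_mat_eigenvector eigenvector_diff)
qed

end
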